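(* Let $\{V_1,W_1,V_2,W_2,\ldots\}$ be a partition of $\mathbb N$ into nonempty bounded intervals of integers such that $\max V_k+1=\min W_k$ and $\max W_k+1=\min V_{k+1}$ for all $k\ge1$. Let $(L_n)_{n=1}^\infty$ be a sequence of non-empty bounded intervals of integers in $\mathbb N$, and let \[\Lambda=\Big\{x\in(0,1)\setminus\mathbb Q\colon a_n(x)\in L_n\text{ for } n\in V_k,\ k\in\mathbb N,\ \text{and } a_n(x)=a_{\max V_k}(x)+n-\max V_k\text{ for } n\in W_k,\ k\in\mathbb N\Big\}.\] (a) There exists a Borel probability measure $\mu$ on $[0,1]$ such that $\mu(\Lambda)=1$ and, for all $n\in\mathbb N$ and all $(a_1,\ldots,a_n)\in\mathbb N^n$ with $I_n(a_1,\ldots,a_n)\cap\Lambda\ne\emptyset$, \[\mu(I_n(a_1,\ldots,a_n))=\begin{cases}\displaystyle\prod_{i=1}^n\frac{1}{\#L_i}&\text{for }n\in V_1,\\[2mm] \displaystyle\prod_{m=1}^k\prod_{i\in V_m}\frac{1}{\#L_i}&\text{for }n\in W_k,\ k\ge1,\\[2mm] \displaystyle\prod_{m=1}^k\prod_{i\in V_m}\frac{1}{\#L_i}\prod_{i=\min V_{k+1}}^{n}\frac{1}{\#L_i}&\text{for }n\in V_{k+1},\ k\ge1.\end{cases}\] (b) If $L_n=[(2n)^t,(2n+1)^t)\cap\mathbb N$ for all $n\ge1$, where $t\in\mathbb N$, $t\ge2$, then $\Lambda\subset J$.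
   Context: Every irrational $x\in(0,1)$ has a regular continued fraction expansion with partial quotients $a_n(x)\in\mathbb N$, $n\ge1$. For $n\in\mathbb N$ and $(a_1,\ldots,a_n)\in\mathbb N^n$, the $n$-th fundamental interval $I_n(a_1,\ldots,a_n)$ is the set of points of $(0,1]$ whose (finite or infinite) regular continued fraction expansion begins with $a_1,\ldots,a_n$; it is an interval with endpoints $p_n/q_n$ and $(p_n+p_{n-1})/(q_n+q_{n-1})$, where $p_{-1}=1,p_0=0,p_i=a_ip_{i-1}+p_{i-2}$ and $q_{-1}=0,q_0=1,q_i=a_iq_{i-1}+q_{i-2}$. $\#$ denotes cardinality. $J=\{x\in(0,1)\setminus\mathbb Q\colon a_n(x)<a_{n+1}(x)\text{ for every }n\ge1\}$. *)

theory Defs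
  imports "HOL-Probability.Probability"
begin

definition gauss_map :: "real \<Rightarrow> real" where
  "gauss_map x = frac (1 / x)"

definition cf_a :: "nat \<Rightarrow> real \<Rightarrow> nat" where
  "cf_a n x = nat \<lfloor>1 / ((gauss_map ^^ (n - 1)) x)\<rfloor>"

text \<open>Convergent numerators/denominators p_n, q_n for n >= 0
  (p_0 = 0, p_1 = 1, q_0 = 1, q_1 = a_1), which agree with the recursion
  p_(-1)=1, p_0=0, q_(-1)=0, q_0=1.\<close>

fun cf_p :: "(nat \<Rightarrow> nat) \<Rightarrow> nat \<Rightarrow> nat" where
  "cf_p a 0 = 0"
| "cf_p a (Suc 0) = 1"
| "cf_p a (Suc (Suc n)) = a (Suc (Suc n)) * cf_p a (Suc n) + cf_p a n"

fun cf_q :: "(nat \<Rightarrow> nat) \<Rightarrow> nat \<Rightarrow> nat" where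
  "cf_q a 0 = 1"
| "cf_q a (Suc 0) = a 1"
| "cf_q a (Suc (Suc n)) = a (Suc (Suc n)) * cf_q a (Suc n) + cf_q a n"

definition fund_interval :: "nat \<Rightarrow> (nat \<Rightarrow> nat) \<Rightarrow> real set" where
  "fund_interval n a =
     (let e1 = real (cf_p a n) / real (cf_q a n);
          e2 = real (cf_p a n + cf_p a (n - 1)) / real (cf_q a n + cf_q a (n - 1))
      in {min e1 e2 .. max e1 e2})"

definition J_set :: "real set" where
  "J_set = {x \<in> {0<..<1} - \<rat>. \<forall>n\<ge>1. cf_a n x < cf_a (Suc n) x}"

definition Lambda_set ::
  "(nat \<Rightarrow> nat set) \<Rightarrow> (nat \<Rightarrow> nat set) \<Rightarrow> (nat \<Rightarrow> nat set) \<Rightarrow> real set" where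
  "Lambda_set V W L = {x \<in> {0<..<1} - \<rat>.
      (\<forall>k\<ge>1. \<forall>n\<in>V k. cf_a n x \<in> L n) \<and>
      (\<forall>k\<ge>1. \<forall>n\<in>W k. cf_a n x = cf_a (Max (V k)) x + n - Max (V k))}"

end

theory Submission
  imports Defs
begin

text \<open>Choose the digits a_i at the positions i outside the W-blocks independently and uniformly
  from L_i and fill in every W-block by increments of one; the continued fraction with these
  digits lies in \<Lambda>. Continued fractions identify digit sequences with the irrationals of (0,1)
  and cylinders with fundamental intervals, so the law \<mu> of this random number is carried
  by \<Lambda> and gives a fundamental interval meeting \<Lambda> the product of 1/#L_i over the free
  positions i \<le> n; grouping these positions by blocks gives the three formulas.
  For (b), digits increase by one inside a W-block, and a digit at a free position n + 1 is at
  least (2n + 2)^t, which exceeds a_n: either a_n < (2n + 1)^t, or n lies in a W-block after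
  the free position v and a_n = a_v + (n - v) < (2v + 1)^t + (n - v) \<le> (2n + 2)^t.\<close>

section \<open>Convergents and the inverse branches of the Gauss map\<close>

definition cf_p_prev :: "(nat \<Rightarrow> nat) \<Rightarrow> nat \<Rightarrow> nat" where
  "cf_p_prev a n = (if n = 0 then 1 else cf_p a (n - 1))"

definition cf_q_prev :: "(nat \<Rightarrow> nat) \<Rightarrow> nat \<Rightarrow> nat" where
  "cf_q_prev a n = (if n = 0 then 0 else cf_q a (n - 1))"

text \<open>\<open>cf_mobius a n t\<close> is [0; a_1, ..., a_(n-1), a_n + t], the inverse branch of the n-th
  iterate of the Gauss map selected by the digits a_1, ..., a_n.\<close>

definition cf_mobius :: "(nat \<Rightarrow> nat) \<Rightarrow> nat \<Rightarrow> real \<Rightarrow> real" where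
  "cf_mobius a n t =
     (real (cf_p a n) + t * real (cf_p_prev a n)) / (real (cf_q a n) + t * real (cf_q_prev a n))"

lemma cf_p_prev_Suc [simp]: "cf_p_prev a (Suc n) = cf_p a n"
  by (simp add: cf_p_prev_def)

lemma cf_q_prev_Suc [simp]: "cf_q_prev a (Suc n) = cf_q a n"
  by (simp add: cf_q_prev_def)

lemma cf_p_Suc: "cf_p a (Suc n) = a (Suc n) * cf_p a n + cf_p_prev a n"
  by (cases n) (auto simp: cf_p_prev_def)

lemma cf_q_Suc: "cf_q a (Suc n) = a (Suc n) * cf_q a n + cf_q_prev a n"
  by (cases n) (auto simp: cf_q_prev_def)

lemma cf_det: "real (cf_p_prev a n) * real (cf_q a n) - real (cf_p a n) * real (cf_q_prev a n) = (-1) ^ n"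
proof (induction n)
  case 0
  then show ?case by (simp add: cf_p_prev_def cf_q_prev_def)
next
  case (Suc n)
  then show ?case by (simp add: cf_p_Suc cf_q_Suc algebra_simps)
qed

lemma cf_q_ge:
  assumes "\<forall>i\<in>{1..n}. a i \<ge> 1"
  shows "1 \<le> cf_q a n" and "n \<le> cf_q a n"
proof -
  have "1 \<le> cf_q a n \<and> n \<le> cf_q a n"
    using assms
  proof (induction a n rule: cf_q.induct)
    case (3 a n)
    then have "cf_q a (Suc n) \<le> a (Suc (Suc n)) * cf_q a (Suc n)" "1 \<le> cf_q a n"
      "Suc n \<le> cf_q a (Suc n)"
      by auto
    then have "Suc (Suc n) \<le> a (Suc (Suc n)) * cf_q a (Suc n) + cf_q a n"
      by linarith
    then show ?case by simp
  qed auto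
  then show "1 \<le> cf_q a n" "n \<le> cf_q a n" by auto
qed

lemma cf_pq_cong:
  "\<forall>i\<in>{1..n}. a i = b i \<Longrightarrow> cf_p a n = cf_p b n \<and> cf_q a n = cf_q b n"
  by (induction a n rule: cf_p.induct) auto

lemma cf_mobius_cong:
  assumes "\<forall>i\<in>{1..n}. a i = b i"
  shows "cf_mobius a n = cf_mobius b n"
proof -
  have "cf_p a (n - 1) = cf_p b (n - 1) \<and> cf_q a (n - 1) = cf_q b (n - 1)"
    using assms by (intro cf_pq_cong) auto
  then show ?thesis
    using cf_pq_cong[OF assms] by (simp add: cf_mobius_def cf_p_prev_def cf_q_prev_def fun_eq_iff)
qed

lemma cf_mobius_0 [simp]: "cf_mobius a 0 t = t"
  by (simp add: cf_mobius_def cf_p_prev_def cf_q_prev_def)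

lemma cf_mobius_Suc:
  assumes "real (a (Suc n)) + t \<noteq> 0"
  shows "cf_mobius a n (1 / (real (a (Suc n)) + t)) = cf_mobius a (Suc n) t"
proof -
  define c where "c = real (a (Suc n)) + t"
  have "c \<noteq> 0" using assms by (simp add: c_def)
  then have "real p + 1 / c * real p' = (c * real p + real p') / c" for p p' :: nat
    by (simp add: field_simps)
  then have "cf_mobius a n (1 / c) =
      (c * real (cf_p a n) + real (cf_p_prev a n)) / (c * real (cf_q a n) + real (cf_q_prev a n))"
    using \<open>c \<noteq> 0\<close> by (simp add: cf_mobius_def)
  also have "\<dots> = cf_mobius a (Suc n) t"
    by (simp add: cf_mobius_def cf_p_Suc cf_q_Suc c_def algebra_simps)
  finally show ?thesis by (simp add: c_def)
qed

lemma cf_mobius_denom_ge: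
  assumes "\<forall>i\<in>{1..n}. a i \<ge> 1" "0 \<le> s"
  shows "1 \<le> real (cf_q a n) + s * real (cf_q_prev a n)"
    and "real (cf_q a n) \<le> real (cf_q a n) + s * real (cf_q_prev a n)"
proof -
  have "0 \<le> s * real (cf_q_prev a n)" using assms(2) by simp
  then show "1 \<le> real (cf_q a n) + s * real (cf_q_prev a n)"
    and "real (cf_q a n) \<le> real (cf_q a n) + s * real (cf_q_prev a n)"
    using cf_q_ge(1)[OF assms(1)] by linarith+
qed

lemma cf_mobius_diff:
  assumes "\<forall>i\<in>{1..n}. a i \<ge> 1" "0 \<le> s" "0 \<le> t"
  shows "cf_mobius a n s - cf_mobius a n t = (s - t) * (-1) ^ n /
     ((real (cf_q a n) + s * real (cf_q_prev a n)) * (real (cf_q a n) + t * real (cf_q_prev a n)))"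
proof -
  have "real (cf_q a n) + s * real (cf_q_prev a n) \<noteq> 0" "real (cf_q a n) + t * real (cf_q_prev a n) \<noteq> 0"
    using cf_mobius_denom_ge(1)[OF assms(1)] assms(2,3) by (metis not_one_le_zero)+
  then show ?thesis
    using cf_det[of a n] by (simp add: cf_mobius_def field_simps)
qed

lemma inj_on_cf_mobius:
  assumes "\<forall>i\<in>{1..n}. a i \<ge> 1"
  shows "inj_on (cf_mobius a n) {0..}"
proof (rule inj_onI)
  fix s t :: real
  assume "s \<in> {0..}" "t \<in> {0..}" "cf_mobius a n s = cf_mobius a n t"
  then show "s = t"
    using cf_mobius_diff[OF assms, of s t] cf_mobius_denom_ge(1)[OF assms] by force
qed

lemma cf_mobius_mono:
  assumes "\<forall>i\<in>{1..n}. a i \<ge> 1" "0 \<le> s" "s \<le> t"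
  shows "even n \<Longrightarrow> cf_mobius a n s \<le> cf_mobius a n t"
    and "odd n \<Longrightarrow> cf_mobius a n t \<le> cf_mobius a n s"
proof -
  define D where "D = (real (cf_q a n) + t * real (cf_q_prev a n)) * (real (cf_q a n) + s * real (cf_q_prev a n))"
  have "0 < D"
    unfolding D_def using cf_mobius_denom_ge(1)[OF assms(1)] assms(2,3) by (smt (verit) mult_pos_pos)
  moreover have "cf_mobius a n t - cf_mobius a n s = (t - s) * (-1) ^ n / D"
    unfolding D_def using cf_mobius_diff[OF assms(1), of t s] assms(2,3) by simp
  moreover have "0 \<le> (t - s) / D" "(s - t) / D \<le> 0"
    using \<open>0 < D\<close> assms(3) by (simp_all add: divide_nonpos_pos)
  ultimately show "even n \<Longrightarrow> cf_mobius a n s \<le> cf_mobius a n t"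
    and "odd n \<Longrightarrow> cf_mobius a n t \<le> cf_mobius a n s"
    by auto
qed

lemma cf_mobius_dist:
  assumes "\<forall>i\<in>{1..n}. a i \<ge> 1" "0 \<le> s" "0 \<le> t"
  shows "\<bar>cf_mobius a n s - cf_mobius a n t\<bar> \<le> \<bar>s - t\<bar> / real (cf_q a n) ^ 2"
proof -
  define D where "D = (real (cf_q a n) + s * real (cf_q_prev a n)) * (real (cf_q a n) + t * real (cf_q_prev a n))"
  have "real (cf_q a n) ^ 2 \<le> D"
    unfolding power2_eq_square D_def
    using cf_mobius_denom_ge[OF assms(1)] assms(2,3) by (intro mult_mono) auto
  moreover have "0 < real (cf_q a n) ^ 2" using cf_q_ge(1)[OF assms(1)] by simp
  ultimately have "0 < D" by linarith
  moreover have "cf_mobius a n s - cf_mobius a n t = (s - t) * (-1) ^ n / D"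
    using cf_mobius_diff[OF assms] by (simp add: D_def)
  ultimately have "\<bar>cf_mobius a n s - cf_mobius a n t\<bar> = \<bar>s - t\<bar> / D"
    by (simp add: abs_mult power_abs)
  also have "\<dots> \<le> \<bar>s - t\<bar> / real (cf_q a n) ^ 2"
    using \<open>0 < real (cf_q a n) ^ 2\<close> \<open>real (cf_q a n) ^ 2 \<le> D\<close> \<open>0 < D\<close>
    by (intro divide_left_mono) auto
  finally show ?thesis .
qed

lemma continuous_on_cf_mobius:
  assumes "\<forall>i\<in>{1..n}. a i \<ge> 1"
  shows "continuous_on {0..} (cf_mobius a n)"
  unfolding cf_mobius_def using cf_mobius_denom_ge(1)[OF assms]
  by (intro continuous_intros) (smt (verit) atLeast_iff)

lemma fund_interval_eq_image:
  assumes "n \<ge> 1" "\<forall>i\<in>{1..n}. a i \<ge> 1"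
  shows "fund_interval n a = cf_mobius a n ` {0..1}"
proof -
  let ?f = "cf_mobius a n"
  have fund: "fund_interval n a = {min (?f 0) (?f 1)..max (?f 0) (?f 1)}"
    using assms(1) by (simp add: fund_interval_def cf_mobius_def cf_p_prev_def cf_q_prev_def Let_def)
  have "continuous_on {0..1} ?f"
    using continuous_on_cf_mobius[OF assms(2)] by (rule continuous_on_subset) auto
  then have "y \<in> ?f ` {0..1}" if "y \<in> {min (?f 0) (?f 1)..max (?f 0) (?f 1)}" for y
    using that IVT'[of ?f 0 y 1] IVT2'[of ?f 1 y 0] by (force simp: min_def max_def split: if_splits)
  moreover have "?f s \<in> {min (?f 0) (?f 1)..max (?f 0) (?f 1)}" if "s \<in> {0..1}" for s
    using that cf_mobius_mono[OF assms(2), of 0 s] cf_mobius_mono[OF assms(2), of s 1]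
    by (cases "even n") auto
  ultimately show ?thesis unfolding fund by blast
qed

lemma cf_mobius_image_Suc_subset:
  assumes "\<forall>i\<in>{1..Suc n}. a i \<ge> 1"
  shows "cf_mobius a (Suc n) ` {0..1} \<subseteq> cf_mobius a n ` {0..1}"
proof
  fix x assume "x \<in> cf_mobius a (Suc n) ` {0..1}"
  then obtain t where t: "t \<in> {0..1}" "x = cf_mobius a (Suc n) t" by blast
  have "a (Suc n) \<ge> 1" using assms by simp
  then have "x = cf_mobius a n (1 / (real (a (Suc n)) + t))" "1 / (real (a (Suc n)) + t) \<in> {0..1}"
    using t cf_mobius_Suc[of a n t] by auto
  then show "x \<in> cf_mobius a n ` {0..1}" by blast
qed

lemma cf_mobius_image_antimono:
  assumes "m \<le> n" "\<forall>i\<in>{1..n}. a i \<ge> 1"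
  shows "cf_mobius a n ` {0..1} \<subseteq> cf_mobius a m ` {0..1}"
  using assms
proof (induction n rule: dec_induct)
  case (step n)
  then have "cf_mobius a (Suc n) ` {0..1} \<subseteq> cf_mobius a n ` {0..1}"
    by (intro cf_mobius_image_Suc_subset) auto
  then show ?case using step by auto
qed simp

section \<open>Digits of irrational numbers\<close>

lemma gauss_map_step:
  assumes "y \<in> {0<..<1} - \<rat>"
  shows "gauss_map y \<in> {0<..<1} - \<rat>" and "1 \<le> nat \<lfloor>1 / y\<rfloor>"
    and "y = 1 / (real (nat \<lfloor>1 / y\<rfloor>) + gauss_map y)"
proof -
  have y: "0 < y" "y < 1" "y \<notin> \<rat>" using assms by auto
  have irr: "1 / y \<notin> \<rat>"
    using y(3) Rats_divide[OF Rats_1, of "1 / y"] y(1) by auto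
  have fl: "1 \<le> \<lfloor>1 / y\<rfloor>" using y by (simp add: le_floor_iff)
  have g: "gauss_map y = 1 / y - \<lfloor>1 / y\<rfloor>" by (simp add: gauss_map_def frac_def)
  have "gauss_map y \<notin> \<rat>"
    using irr Rats_add[of "gauss_map y" "of_int \<lfloor>1 / y\<rfloor>"] by (auto simp: g)
  moreover have "gauss_map y \<noteq> 0"
    using irr Ints_subset_Rats by (auto simp: gauss_map_def frac_eq_0_iff)
  moreover have "0 \<le> gauss_map y" "gauss_map y < 1" by (auto simp: gauss_map_def frac_lt_1)
  ultimately show "gauss_map y \<in> {0<..<1} - \<rat>" by auto
  show "1 \<le> nat \<lfloor>1 / y\<rfloor>" using fl by linarith
  show "y = 1 / (real (nat \<lfloor>1 / y\<rfloor>) + gauss_map y)" using fl y(1) by (simp add: g)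
qed

lemma gauss_map_iterate_irrational:
  "x \<in> {0<..<1} - \<rat> \<Longrightarrow> (gauss_map ^^ n) x \<in> {0<..<1} - \<rat>"
proof (induction n)
  case (Suc n)
  then show ?case using gauss_map_step(1)[OF Suc.IH] by simp
qed simp

lemma cf_a_Suc: "cf_a (Suc n) x = nat \<lfloor>1 / (gauss_map ^^ n) x\<rfloor>"
  by (simp add: cf_a_def)

lemma cf_a_ge_1: "x \<in> {0<..<1} - \<rat> \<Longrightarrow> 1 \<le> i \<Longrightarrow> 1 \<le> cf_a i x"
  using gauss_map_step(2)[OF gauss_map_iterate_irrational] by (cases i) (auto simp: cf_a_Suc)

lemma cf_mobius_gauss_map_iterate:
  assumes x: "x \<in> {0<..<1} - \<rat>"
  shows "x = cf_mobius (\<lambda>i. cf_a i x) n ((gauss_map ^^ n) x)"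
proof (induction n)
  case 0
  then show ?case by simp
next
  case (Suc n)
  let ?y = "(gauss_map ^^ n) x"
  have "?y = 1 / (real (cf_a (Suc n) x) + gauss_map ?y)"
    using gauss_map_step(3)[OF gauss_map_iterate_irrational[OF x]] by (simp add: cf_a_Suc)
  moreover have "0 < real (cf_a (Suc n) x) + gauss_map ?y"
    using cf_a_ge_1[OF x, of "Suc n"] gauss_map_step(1)[OF gauss_map_iterate_irrational[OF x, of n]]
    by (auto intro: add_pos_pos)
  ultimately show ?case
    using Suc cf_mobius_Suc[of "\<lambda>i. cf_a i x" n "gauss_map ?y"] by force
qed

lemma mem_cf_mobius_image_iff:
  assumes x: "x \<in> {0<..<1} - \<rat>" and a: "\<forall>i\<in>{1..n}. a i \<ge> 1"
  shows "x \<in> cf_mobius a n ` {0..1} \<longleftrightarrow> (\<forall>i\<in>{1..n}. cf_a i x = a i)"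
proof
  assume "\<forall>i\<in>{1..n}. cf_a i x = a i"
  then have "x = cf_mobius a n ((gauss_map ^^ n) x)"
    using cf_mobius_gauss_map_iterate[OF x, of n] cf_mobius_cong[of n a "\<lambda>i. cf_a i x"] by simp
  then show "x \<in> cf_mobius a n ` {0..1}"
    using gauss_map_iterate_irrational[OF x, of n] by force
next
  show "x \<in> cf_mobius a n ` {0..1} \<Longrightarrow> \<forall>i\<in>{1..n}. cf_a i x = a i"
    using a
  proof (induction n)
    case 0
    then show ?case by simp
  next
    case (Suc n)
    let ?c = "a (Suc n)" and ?y = "(gauss_map ^^ n) x"
    have a_n: "\<forall>i\<in>{1..n}. a i \<ge> 1" and c: "?c \<ge> 1" using Suc.prems(2) by auto
    have IH: "\<forall>i\<in>{1..n}. cf_a i x = a i"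
      using Suc cf_mobius_image_Suc_subset[of n a] by auto
    obtain s where s: "s \<in> {0..1}" "x = cf_mobius a (Suc n) s" using Suc.prems(1) by blast
    have y: "?y \<in> {0<..<1} - \<rat>" using gauss_map_iterate_irrational[OF x] .
    have "cf_mobius a n ?y = cf_mobius a n (1 / (?c + s))"
      using cf_mobius_gauss_map_iterate[OF x, of n] cf_mobius_cong[of n a "\<lambda>i. cf_a i x"] IH
        cf_mobius_Suc[of a n s] s c by simp
    then have "?y = 1 / (?c + s)"
      using inj_on_cf_mobius[OF a_n] y s c by (auto dest: inj_onD)
    then have "1 / ?y = ?c + s" using s c by simp
    moreover have "1 / ?y \<noteq> ?c + 1"
      using y Rats_divide[OF Rats_1, of "1 / ?y"] by (auto simp del: of_nat_Suc)
    ultimately have "\<lfloor>1 / ?y\<rfloor> = int ?c" using s by (simp add: floor_eq_iff)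
    then have "cf_a (Suc n) x = ?c" by (simp add: cf_a_Suc)
    then show ?case using IH by (auto simp: le_Suc_eq)
  qed
qed

lemma cf_mobius_image_dist:
  assumes "\<forall>i\<in>{1..n}. a i \<ge> 1" "x \<in> cf_mobius a n ` {0..1}" "y \<in> cf_mobius a n ` {0..1}"
  shows "\<bar>x - y\<bar> \<le> 1 / real (cf_q a n) ^ 2"
proof -
  obtain s t where "s \<in> {0..1}" "t \<in> {0..1}" "x = cf_mobius a n s" "y = cf_mobius a n t"
    using assms(2,3) by blast
  then show ?thesis
    using cf_mobius_dist[OF assms(1), of s t] cf_q_ge(1)[OF assms(1)]
    by (smt (verit) atLeastAtMost_iff divide_right_mono zero_le_power2)
qed

lemma inverse_cf_q_sq_le:
  assumes "\<forall>i\<in>{1..n}. a i \<ge> 1" "1 \<le> n"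
  shows "1 / real (cf_q a n) ^ 2 \<le> 1 / real n"
proof -
  have n: "real n \<le> real (cf_q a n)" and q: "1 \<le> real (cf_q a n)"
    using cf_q_ge[OF assms(1)] by auto
  have "real (cf_q a n) * 1 \<le> real (cf_q a n) * real (cf_q a n)"
    using q by (intro mult_left_mono) auto
  then have "real n \<le> real (cf_q a n) ^ 2" using n unfolding power2_eq_square by linarith
  then show ?thesis using assms(2) by (simp add: frac_le)
qed

lemma cf_nested_point:
  assumes "\<forall>i\<ge>1. a i \<ge> 1"
  obtains x where "\<And>n. x \<in> cf_mobius a n ` {0..1}"
proof (rule decreasing_closed_nest)
  have a: "\<forall>i\<in>{1..n}. a i \<ge> 1" for n using assms by auto
  show "closed (cf_mobius a n ` {0..1})" for n
    using continuous_on_subset[OF continuous_on_cf_mobius[OF a], of "{0..1}"]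
    by (intro compact_imp_closed compact_continuous_image) auto
  show "cf_mobius a n ` {0..1} \<noteq> {}" for n by simp
  show "cf_mobius a n ` {0..1} \<subseteq> cf_mobius a m ` {0..1}" if "m \<le> n" for m n
    using cf_mobius_image_antimono[OF that a] .
  show "\<exists>n. \<forall>x\<in>cf_mobius a n ` {0..1}. \<forall>y\<in>cf_mobius a n ` {0..1}. dist x y < e"
    if e: "0 < e" for e
  proof -
    obtain N where N: "1 / real (Suc N) < e" using reals_Archimedean[OF e] by (auto simp: inverse_eq_divide)
    have "dist x y < e" if "x \<in> cf_mobius a (Suc N) ` {0..1}" "y \<in> cf_mobius a (Suc N) ` {0..1}" for x y
      using cf_mobius_image_dist[OF a that] inverse_cf_q_sq_le[OF a, of "Suc N"] N
      by (simp add: dist_real_def)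
    then show ?thesis by blast
  qed
qed (rule that)

text \<open>A rational point r/s would equal every convergent with denominator beyond s, so two
  consecutive convergents would coincide, contradicting \<open>cf_det\<close>.\<close>

lemma cf_nested_point_irrational:
  assumes a: "\<forall>i\<ge>1. a i \<ge> 1" and x: "\<And>n. x \<in> cf_mobius a n ` {0..1}"
  shows "x \<notin> \<rat>"
proof
  assume "x \<in> \<rat>"
  then obtain r s where rs: "0 < s" "x = of_int r / of_int s" by (rule Rats_cases') blast
  have an: "\<forall>i\<in>{1..n}. a i \<ge> 1" for n using a by auto
  have conv: "int (cf_p a m) * s = r * int (cf_q a m)" if m: "nat s < m" for m
  proof -
    let ?p = "real (cf_p a m)" and ?q = "real (cf_q a m)"
    have q: "of_int s < ?q" using cf_q_ge(2)[OF an, of m] m by linarith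
    have "cf_mobius a m 0 \<in> cf_mobius a m ` {0..1}" by simp
    then have "\<bar>?p / ?q - x\<bar> \<le> 1 / ?q ^ 2"
      using cf_mobius_image_dist[OF an _ x] by (simp add: cf_mobius_def)
    then have "\<bar>?p * of_int s - of_int r * ?q\<bar> \<le> of_int s / ?q"
      using rs q by (simp add: field_simps power2_eq_square abs_div abs_mult)
    also have "\<dots> < 1" using q rs by simp
    finally have "\<bar>of_int (int (cf_p a m) * s - r * int (cf_q a m))\<bar> < (1 :: real)" by simp
    then show ?thesis by linarith
  qed
  define m where "m = Suc (nat s)"
  have eq: "real (cf_p a m) * of_int s = of_int r * real (cf_q a m)"
    "real (cf_p a (Suc m)) * of_int s = of_int r * real (cf_q a (Suc m))"
    using conv[of m] conv[of "Suc m"] unfolding m_def by (metis of_int_mult of_int_of_nat_eq lessI less_SucI)+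
  have "of_int s * (real (cf_p a m) * real (cf_q a (Suc m)) - real (cf_p a (Suc m)) * real (cf_q a m))
      = (real (cf_p a m) * of_int s) * real (cf_q a (Suc m)) - (real (cf_p a (Suc m)) * of_int s) * real (cf_q a m)"
    by (simp add: algebra_simps)
  also have "\<dots> = 0" unfolding eq by (simp add: algebra_simps)
  finally show False using cf_det[of a "Suc m"] rs(1) by simp
qed

definition cf_value :: "(nat \<Rightarrow> nat) \<Rightarrow> real" where
  "cf_value a = lim (\<lambda>n. cf_mobius a n 0)"

lemma cf_value:
  assumes a: "\<forall>i\<ge>1. a i \<ge> 1"
  shows "cf_value a \<in> {0<..<1} - \<rat>" and "\<forall>i\<ge>1. cf_a i (cf_value a) = a i"
    and "(\<lambda>n. cf_mobius a n 0) \<longlonglongrightarrow> cf_value a"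
proof -
  have an: "\<forall>i\<in>{1..n}. a i \<ge> 1" for n using a by auto
  obtain x where x: "\<And>n. x \<in> cf_mobius a n ` {0..1}" using cf_nested_point[OF a] by blast
  have "\<forall>\<^sub>F n in sequentially. norm (cf_mobius a n 0 - x) \<le> 1 / real n"
    using eventually_ge_at_top[of 1]
  proof eventually_elim
    case (elim n)
    have "\<bar>cf_mobius a n 0 - x\<bar> \<le> 1 / real (cf_q a n) ^ 2"
      by (rule cf_mobius_image_dist[OF an _ x]) simp
    then show ?case using inverse_cf_q_sq_le[OF an elim] by simp
  qed
  then have lim: "(\<lambda>n. cf_mobius a n 0) \<longlonglongrightarrow> x"
    by (rule LIM_zero_cancel[OF Lim_null_comparison[OF _ lim_1_over_n]])
  then have "cf_value a = x" unfolding cf_value_def by (rule limI)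
  have "x \<notin> \<rat>" using cf_nested_point_irrational[OF a x] .
  moreover have "x \<in> {0<..1}"
  proof -
    obtain t where t: "t \<in> {0..1}" "x = cf_mobius a 1 t" using x[of 1] by blast
    moreover have "1 \<le> real (a 1) + t" using a[rule_format, of 1] t by simp
    ultimately have "x = 1 / (real (a 1) + t)" using cf_mobius_Suc[of a 0 t] by simp
    then show ?thesis using \<open>1 \<le> real (a 1) + t\<close> by simp
  qed
  moreover have "x \<noteq> 1" using \<open>x \<notin> \<rat>\<close> by auto
  ultimately have x01: "x \<in> {0<..<1} - \<rat>" by simp
  show "cf_value a \<in> {0<..<1} - \<rat>" using x01 \<open>cf_value a = x\<close> by simp
  show "\<forall>i\<ge>1. cf_a i (cf_value a) = a i"
  proof (intro allI impI)
    fix i :: nat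
    assume "1 \<le> i"
    then show "cf_a i (cf_value a) = a i"
      using mem_cf_mobius_image_iff[OF x01 an, of i] x[of i] \<open>cf_value a = x\<close> by auto
  qed
  show "(\<lambda>n. cf_mobius a n 0) \<longlonglongrightarrow> cf_value a" using lim \<open>cf_value a = x\<close> by simp
qed

section \<open>Measurability\<close>

lemma gauss_map_measurable [measurable]: "gauss_map \<in> borel_measurable borel"
  unfolding gauss_map_def[abs_def] frac_def by measurable

lemma gauss_map_iterate_measurable [measurable]: "(gauss_map ^^ n) \<in> borel_measurable borel"
  by (induction n) auto

lemma cf_a_measurable [measurable]: "cf_a n \<in> borel \<rightarrow>\<^sub>M count_space UNIV"
  unfolding cf_a_def[abs_def] by measurable

lemma Rats_sets_borel: "\<rat> \<in> sets (borel :: real measure)"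
  by (rule sets.countable[OF _ countable_rat]) auto

lemma pred_cf_a_shift [measurable]: "Measurable.pred borel (\<lambda>x. cf_a n x = cf_a m x + n - m)"
  by (rule measurable_compose_countable[where g="cf_a m"]) measurable

lemma Lambda_set_borel: "Lambda_set V W L \<in> sets borel"
proof -
  have "Measurable.pred borel (\<lambda>x. (\<forall>k\<ge>1. \<forall>n\<in>V k. cf_a n x \<in> L n) \<and>
      (\<forall>k\<ge>1. \<forall>n\<in>W k. cf_a n x = cf_a (Max (V k)) x + n - Max (V k)))"
    by measurable
  then show ?thesis
    using Rats_sets_borel unfolding Lambda_set_def by auto
qed

lemma borel_measurable_cf_mobius:
  assumes F: "\<And>i. (\<lambda>w. real (F w i)) \<in> borel_measurable M"
  shows "(\<lambda>w. cf_mobius (F w) n t) \<in> borel_measurable M"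
proof -
  have pq: "(\<lambda>w. real (cf_p (F w) m)) \<in> borel_measurable M \<and>
      (\<lambda>w. real (cf_q (F w) m)) \<in> borel_measurable M" for m
  proof -
    have "((\<lambda>w. real (cf_p (F w) m)) \<in> borel_measurable M \<and>
        (\<lambda>w. real (cf_q (F w) m)) \<in> borel_measurable M) \<and>
      ((\<lambda>w. real (cf_p (F w) (Suc m))) \<in> borel_measurable M \<and>
        (\<lambda>w. real (cf_q (F w) (Suc m))) \<in> borel_measurable M)"
      by (induction m) (simp_all add: F borel_measurable_add borel_measurable_times)
    then show ?thesis by blast
  qed
  moreover have "(\<lambda>w. real (cf_p_prev (F w) n)) \<in> borel_measurable M"
    using pq[of "n - 1"] by (cases "n = 0") (simp_all add: cf_p_prev_def)
  moreover have "(\<lambda>w. real (cf_q_prev (F w) n)) \<in> borel_measurable M"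
    using pq[of "n - 1"] by (cases "n = 0") (simp_all add: cf_q_prev_def)
  ultimately show ?thesis
    using pq[of n] unfolding cf_mobius_def
    by (intro borel_measurable_divide borel_measurable_add borel_measurable_times borel_measurable_const) auto
qed

section \<open>The block structure of the positions\<close>

lemma shift_on_interval_iff:
  fixes f :: "nat \<Rightarrow> nat"
  shows "(\<forall>n\<in>{Suc v..u}. f n = f v + n - v) \<longleftrightarrow> (\<forall>n\<in>{Suc v..u}. f n = Suc (f (n - 1)))"
proof (induction u)
  case 0
  then show ?case by simp
next
  case (Suc u)
  show ?case
  proof (cases "v \<le> u")
    case True
    then have split: "{Suc v..Suc u} = insert (Suc u) {Suc v..u}" by auto
    have "f u = f v + u - v" if "\<forall>n\<in>{Suc v..u}. f n = f v + n - v"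
      using that True by (cases "u = v") auto
    moreover have "f u = f v + u - v" if "\<forall>n\<in>{Suc v..u}. f n = Suc (f (n - 1))"
      using that Suc.IH True by (cases "u = v") auto
    ultimately show ?thesis unfolding split using Suc.IH True by auto
  next
    case False
    then show ?thesis by simp
  qed
qed

lemma power_add_ge:
  fixes y d t :: nat
  assumes "1 \<le> t"
  shows "y ^ t + d \<le> (y + d) ^ t"
proof (induction d)
  case (Suc d)
  have "(y + d) ^ t < (y + Suc d) ^ t" using assms by (intro power_strict_mono) auto
  then show ?case using Suc.IH by simp
qed simp

lemma Min_Max_atLeastAtMost:
  fixes l u :: nat
  assumes "l \<le> u"
  shows "Min {l..u} = l" and "Max {l..u} = u"
  using assms by (auto intro!: Min_eqI Max_eqI)

locale block_partition =
  fixes V W :: "nat \<Rightarrow> nat set"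
  assumes V_int: "\<forall>k\<ge>1. \<exists>l u. l \<le> u \<and> V k = {l..u}"
    and W_int: "\<forall>k\<ge>1. \<exists>l u. l \<le> u \<and> W k = {l..u}"
    and cover: "(\<Union>k\<in>{1..}. V k \<union> W k) = {1..}"
    and disj: "\<forall>k\<ge>1. \<forall>m\<ge>1. (k \<noteq> m \<longrightarrow> V k \<inter> V m = {} \<and> W k \<inter> W m = {})
                 \<and> V k \<inter> W m = {}"
    and VW: "\<forall>k\<ge>1. Max (V k) + 1 = Min (W k)"
    and WV: "\<forall>k\<ge>1. Max (W k) + 1 = Min (V (Suc k))"
begin

definition W_all :: "nat set" where
  "W_all = (\<Union>k\<in>{1..}. W k)"

lemma V_Min_le_Max: "1 \<le> k \<Longrightarrow> Min (V k) \<le> Max (V k)"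
  and mem_V_iff: "1 \<le> k \<Longrightarrow> i \<in> V k \<longleftrightarrow> Min (V k) \<le> i \<and> i \<le> Max (V k)"
proof -
  assume "1 \<le> k"
  then obtain l u where "l \<le> u" "V k = {l..u}" using V_int by blast
  then show "Min (V k) \<le> Max (V k)" "i \<in> V k \<longleftrightarrow> Min (V k) \<le> i \<and> i \<le> Max (V k)"
    by (simp_all add: Min_Max_atLeastAtMost)
qed

lemma V_Max_less_W_Max: "1 \<le> k \<Longrightarrow> Max (V k) < Max (W k)"
  and mem_W_iff: "1 \<le> k \<Longrightarrow> i \<in> W k \<longleftrightarrow> Max (V k) < i \<and> i \<le> Max (W k)"
proof -
  assume "1 \<le> k"
  moreover obtain l u where "l \<le> u" "W k = {l..u}" using W_int \<open>1 \<le> k\<close> by blast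
  moreover have "Min (W k) = Suc (Max (V k))" using VW \<open>1 \<le> k\<close> by simp
  ultimately show "Max (V k) < Max (W k)" "i \<in> W k \<longleftrightarrow> Max (V k) < i \<and> i \<le> Max (W k)"
    by (auto simp: Min_Max_atLeastAtMost)
qed

lemma V_Suc_Min: "1 \<le> k \<Longrightarrow> Min (V (Suc k)) = Suc (Max (W k))"
  using WV by simp

lemma V_pos: "1 \<le> k \<Longrightarrow> i \<in> V k \<Longrightarrow> 1 \<le> i"
  using cover by auto

lemma V_disjoint_W_all: "1 \<le> k \<Longrightarrow> i \<in> V k \<Longrightarrow> i \<notin> W_all"
  using disj unfolding W_all_def by blast

lemma not_W_all_imp_V: "1 \<le> i \<Longrightarrow> i \<notin> W_all \<Longrightarrow> \<exists>k\<ge>1. i \<in> V k"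
  using cover unfolding W_all_def by blast

lemma V_Min_mono:
  assumes "1 \<le> k" "k \<le> m"
  shows "Min (V k) \<le> Min (V m)"
  using assms(2)
proof (induction m rule: dec_induct)
  case (step m)
  then have "1 \<le> m" using assms(1) by simp
  then have "Min (V m) \<le> Min (V (Suc m))"
    using V_Min_le_Max V_Max_less_W_Max V_Suc_Min by fastforce
  then show ?case using step by simp
qed simp

lemma V_1_Min: "Min (V 1) = 1"
proof -
  obtain k where k: "1 \<le> k" "1 \<in> V k \<union> W k" using cover by auto
  then have "Min (V k) \<le> 1"
    using mem_V_iff[OF k(1)] mem_W_iff[OF k(1)] V_Min_le_Max[OF k(1)] by auto
  moreover have "1 \<le> Min (V 1)"
    using V_pos[of 1 "Min (V 1)"] mem_V_iff[of 1] V_Min_le_Max[of 1] by simp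
  ultimately show ?thesis using V_Min_mono[OF order_refl k(1)] by simp
qed

lemma W_all_ge_2: "i \<in> W_all \<Longrightarrow> 2 \<le> i"
proof -
  assume "i \<in> W_all"
  then obtain k where k: "1 \<le> k" "i \<in> W k" by (auto simp: W_all_def)
  have "1 \<le> Min (V k)" using V_Min_mono[OF order_refl k(1)] V_1_Min by simp
  then show "2 \<le> i" using V_Min_le_Max[OF k(1)] mem_W_iff[OF k(1)] k(2) by simp
qed

lemma below_V_Min_minus_W_all:
  assumes "1 \<le> k"
  shows "{1..<Min (V k)} - W_all = (\<Union>m\<in>{1..<k}. V m)"
  using assms
proof (induction k rule: dec_induct)
  case base
  then show ?case using V_1_Min by simp
next
  case (step k)
  have "1 \<le> Min (V k)" using V_Min_mono[OF order_refl step.hyps(1)] V_1_Min by simp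
  then have "{1..<Min (V (Suc k))} = {1..<Min (V k)} \<union> V k \<union> W k"
    using V_Min_le_Max[OF step.hyps(1)] V_Max_less_W_Max[OF step.hyps(1)] V_Suc_Min[OF step.hyps(1)]
      mem_V_iff[OF step.hyps(1)] mem_W_iff[OF step.hyps(1)]
    by auto
  moreover have "W k \<subseteq> W_all" "V k \<inter> W_all = {}"
    using step.hyps(1) V_disjoint_W_all unfolding W_all_def by auto
  moreover have "{1..<Suc k} = insert k {1..<k}" using step.hyps(1) by auto
  ultimately show ?case using step.IH by auto
qed

lemma finite_V: "1 \<le> k \<Longrightarrow> finite (V k)"
  using V_int by (metis finite_atLeastAtMost)

lemma prod_prefix_V_1:
  assumes "n \<in> V 1"
  shows "(\<Prod>i\<in>{1..n} - W_all. f i) = (\<Prod>i=1..n. f i)"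
proof -
  have "i \<in> V 1" if "i \<in> {1..n}" for i
    using that assms mem_V_iff[of 1 i] mem_V_iff[of 1 n] V_1_Min by simp
  then have "{1..n} - W_all = {1..n}" using V_disjoint_W_all[of 1] by blast
  then show ?thesis by simp
qed

lemma prod_UN_V: "(\<Prod>i\<in>(\<Union>m\<in>{1..k}. V m). f i) = (\<Prod>m=1..k. \<Prod>i\<in>V m. f i)"
  by (rule prod.UNION_disjoint) (use finite_V disj in auto)

lemma prod_prefix_W:
  assumes k: "1 \<le> k" and n: "n \<in> W k"
  shows "(\<Prod>i\<in>{1..n} - W_all. f i) = (\<Prod>m=1..k. \<Prod>i\<in>V m. f i)"
proof -
  have "1 \<le> Min (V k)" using V_Min_mono[OF order_refl k] V_1_Min by simp
  then have "{1..n} = {1..<Min (V k)} \<union> V k \<union> {Suc (Max (V k))..n}"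
    using mem_V_iff[OF k] mem_W_iff[OF k] V_Min_le_Max[OF k] n by auto
  moreover have "{Suc (Max (V k))..n} \<subseteq> W_all" using mem_W_iff[OF k] n k by (auto simp: W_all_def)
  moreover have "V k \<inter> W_all = {}" using V_disjoint_W_all[OF k] by blast
  ultimately have "{1..n} - W_all = (\<Union>m\<in>{1..<k}. V m) \<union> V k"
    using below_V_Min_minus_W_all[OF k] by blast
  also have "\<dots> = (\<Union>m\<in>{1..k}. V m)" using k by (auto simp: le_less)
  finally show ?thesis unfolding prod_UN_V[symmetric] by simp
qed

lemma prod_prefix_V_Suc:
  assumes k: "1 \<le> k" and n: "n \<in> V (Suc k)"
  shows "(\<Prod>i\<in>{1..n} - W_all. f i) =
    (\<Prod>m=1..k. \<Prod>i\<in>V m. f i) * (\<Prod>i=Min (V (Suc k))..n. f i)"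
proof -
  have k': "1 \<le> Suc k" by simp
  have "1 \<le> Min (V (Suc k))" using V_Min_mono[OF order_refl k'] V_1_Min by simp
  then have "{1..n} = {1..<Min (V (Suc k))} \<union> {Min (V (Suc k))..n}"
    using mem_V_iff[OF k'] n by auto
  moreover have "{Min (V (Suc k))..n} \<inter> W_all = {}"
    using mem_V_iff[OF k'] n V_disjoint_W_all[OF k'] by auto
  moreover have U: "(\<Union>m\<in>{1..k}. V m) = {1..<Min (V (Suc k))} - W_all"
    using below_V_Min_minus_W_all[OF k'] by (simp add: atLeastLessThanSuc_atLeastAtMost)
  ultimately have "{1..n} - W_all = (\<Union>m\<in>{1..k}. V m) \<union> {Min (V (Suc k))..n}"
    "(\<Union>m\<in>{1..k}. V m) \<inter> {Min (V (Suc k))..n} = {}"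
    by auto
  moreover have "finite (\<Union>m\<in>{1..k}. V m)" using finite_V by auto
  ultimately show ?thesis unfolding prod_UN_V[symmetric] by (simp add: prod.union_disjoint)
qed

lemma Lambda_set_iff:
  "x \<in> Lambda_set V W L \<longleftrightarrow> x \<in> {0<..<1} - \<rat> \<and>
     (\<forall>i. 1 \<le> i \<longrightarrow> i \<notin> W_all \<longrightarrow> cf_a i x \<in> L i) \<and>
     (\<forall>i\<in>W_all. cf_a i x = Suc (cf_a (i - 1) x))"
proof -
  have V_part: "(\<forall>k\<ge>1. \<forall>n\<in>V k. cf_a n x \<in> L n) \<longleftrightarrow>
      (\<forall>i. 1 \<le> i \<longrightarrow> i \<notin> W_all \<longrightarrow> cf_a i x \<in> L i)"
  proof
    assume "\<forall>k\<ge>1. \<forall>n\<in>V k. cf_a n x \<in> L n"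
    then show "\<forall>i. 1 \<le> i \<longrightarrow> i \<notin> W_all \<longrightarrow> cf_a i x \<in> L i" using not_W_all_imp_V by blast
  next
    assume "\<forall>i. 1 \<le> i \<longrightarrow> i \<notin> W_all \<longrightarrow> cf_a i x \<in> L i"
    then show "\<forall>k\<ge>1. \<forall>n\<in>V k. cf_a n x \<in> L n" using V_pos V_disjoint_W_all by blast
  qed
  have "(\<forall>n\<in>W k. cf_a n x = cf_a (Max (V k)) x + n - Max (V k)) \<longleftrightarrow>
      (\<forall>n\<in>W k. cf_a n x = Suc (cf_a (n - 1) x))" if "1 \<le> k" for k
  proof -
    define u where "u = Max (W k)"
    have "i \<in> W k \<longleftrightarrow> i \<in> {Suc (Max (V k))..u}" for i
      using mem_W_iff[OF that, of i] by (simp add: u_def Suc_le_eq)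
    then have "W k = {Suc (Max (V k))..u}" by blast
    then show ?thesis using shift_on_interval_iff[of "Max (V k)" u "\<lambda>n. cf_a n x"] by simp
  qed
  then have "(\<forall>k\<ge>1. \<forall>n\<in>W k. cf_a n x = cf_a (Max (V k)) x + n - Max (V k)) \<longleftrightarrow>
      (\<forall>k\<ge>1. \<forall>n\<in>W k. cf_a n x = Suc (cf_a (n - 1) x))"
    by simp
  also have "\<dots> \<longleftrightarrow> (\<forall>i\<in>W_all. cf_a i x = Suc (cf_a (i - 1) x))"
    unfolding W_all_def by auto
  finally show ?thesis using V_part unfolding Lambda_set_def by simp
qed

lemma Lambda_set_subset_J_set:
  assumes t: "1 \<le> t" and L: "\<forall>n\<ge>1. L n = {(2*n)^t..<(2*n+1)^t}"
  shows "Lambda_set V W L \<subseteq> J_set"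
proof
  fix x
  assume x: "x \<in> Lambda_set V W L"
  note x_iff = x[unfolded Lambda_set_iff]
  have below: "cf_a n x < (2 * n + 2) ^ t" if n: "1 \<le> n" for n
  proof (cases "n \<in> W_all")
    case False
    then have "cf_a n x < (2 * n + 1) ^ t" using x_iff L n by auto
    also have "\<dots> \<le> (2 * n + 2) ^ t" by (rule power_mono) auto
    finally show ?thesis .
  next
    case True
    then obtain k where k: "1 \<le> k" "n \<in> W k" by (auto simp: W_all_def)
    define v where "v = Max (V k)"
    have "v \<in> V k" "v < n" using mem_V_iff[OF k(1)] mem_W_iff[OF k(1)] V_Min_le_Max[OF k(1)] k(2)
      by (auto simp: v_def)
    then have "cf_a v x < (2 * v + 1) ^ t"
      using x_iff L V_pos[OF k(1)] V_disjoint_W_all[OF k(1)] by auto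
    moreover have "cf_a n x = cf_a v x + n - v" using x k unfolding Lambda_set_def v_def by auto
    moreover have "(2 * v + 1) ^ t + (2 * n + 1 - 2 * v) \<le> (2 * n + 2) ^ t"
      using power_add_ge[OF t, of "2 * v + 1" "2 * n + 1 - 2 * v"] \<open>v < n\<close> by simp
    ultimately show ?thesis using \<open>v < n\<close> by linarith
  qed
  have "cf_a n x < cf_a (Suc n) x" if n: "1 \<le> n" for n
  proof (cases "Suc n \<in> W_all")
    case True
    then show ?thesis using x_iff by auto
  next
    case False
    then have "cf_a (Suc n) x \<in> L (Suc n)" using x_iff by auto
    then have "(2 * n + 2) ^ t \<le> cf_a (Suc n) x" using L[rule_format, of "Suc n"] by simp
    then show ?thesis using below[OF n] by linarith
  qed
  then show "x \<in> J_set" using x_iff unfolding J_set_def by auto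
qed


end

section \<open>The measure \<mu>\<close>

text \<open>The \<open>max\<close> keeps the digits admissible for every \<open>w\<close>, not only for almost every one.\<close>

primrec step_digits :: "nat set \<Rightarrow> (nat \<Rightarrow> nat) \<Rightarrow> nat \<Rightarrow> nat" where
  "step_digits S w 0 = 1"
| "step_digits S w (Suc n) = (if Suc n \<in> S then Suc (step_digits S w n) else max 1 (w (Suc n)))"

lemma step_digits_ge_1: "1 \<le> step_digits S w n"
  by (cases n) auto

lemma borel_measurable_step_digits:
  assumes "\<And>i. (\<lambda>w. real (w i)) \<in> borel_measurable M"
  shows "(\<lambda>w. real (step_digits S w n)) \<in> borel_measurable M"
proof (induction n)
  case (Suc n)
  have "(\<lambda>w. max 1 (real (w (Suc n)))) \<in> borel_measurable M" using assms by measurable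
  then show ?case using Suc by (cases "Suc n \<in> S") (simp_all add: of_nat_max borel_measurable_add)
qed simp

lemma step_digits_eq_iff:
  assumes "1 \<notin> S" and a: "\<forall>i\<in>{1..n}. i \<in> S \<longrightarrow> a i = Suc (a (i - 1))"
    and w: "\<forall>i\<in>{1..n}. 1 \<le> w i"
  shows "(\<forall>i\<in>{1..n}. step_digits S w i = a i) \<longleftrightarrow> (\<forall>i\<in>{1..n} - S. w i = a i)"
  using a w
proof (induction n)
  case 0
  then show ?case by simp
next
  case (Suc n)
  have IH: "(\<forall>i\<in>{1..n}. step_digits S w i = a i) \<longleftrightarrow> (\<forall>i\<in>{1..n} - S. w i = a i)"
    using Suc by auto
  have split: "{1..Suc n} = insert (Suc n) {1..n}" by auto
  show ?case
  proof (cases "Suc n \<in> S")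
    case True
    then have "1 \<le> n" using assms(1) by (cases n) auto
    then show ?thesis unfolding split using IH True Suc.prems(1) by auto
  next
    case False
    then show ?thesis unfolding split using IH Suc.prems(2) by (auto simp: max_def)
  qed
qed

locale block_digit_measure = block_partition +
  fixes L :: "nat \<Rightarrow> nat set"
  assumes L_int: "\<forall>n\<ge>1. \<exists>l u. 1 \<le> l \<and> l \<le> u \<and> L n = {l..u}"
begin

text \<open>The coordinates at 0 and in \<open>W_all\<close> are ignored by \<open>choice_point\<close>; the dummy range
  {1} only makes the product measure well defined at 0.\<close>

definition digit_range :: "nat \<Rightarrow> nat set" where
  "digit_range i = (if 1 \<le> i then L i else {1})"

definition choice_space :: "(nat \<Rightarrow> nat) measure" where
  "choice_space = PiM UNIV (\<lambda>i. measure_pmf (pmf_of_set (digit_range i)))"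

definition choice_point :: "(nat \<Rightarrow> nat) \<Rightarrow> real" where
  "choice_point w = cf_value (step_digits W_all w)"

definition mu :: "real measure" where
  "mu = distr choice_space (restrict_space borel {0..1}) choice_point"

lemma digit_range: "finite (digit_range i)" "digit_range i \<noteq> {}" "j \<in> digit_range i \<Longrightarrow> 1 \<le> j"
proof -
  have "\<exists>l u. 1 \<le> l \<and> l \<le> u \<and> digit_range i = {l..u}"
  proof (cases "1 \<le> i")
    case True
    then show ?thesis using L_int by (simp add: digit_range_def)
  next
    case False
    then have "digit_range i = {1..1}" by (simp add: digit_range_def)
    then show ?thesis by blast
  qed
  then show "finite (digit_range i)" "digit_range i \<noteq> {}" "j \<in> digit_range i \<Longrightarrow> 1 \<le> j" by auto
qed

sublocale choices: product_prob_space "\<lambda>i. measure_pmf (pmf_of_set (digit_range i))" UNIV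
  by unfold_locales

lemma prob_space_choice_space: "prob_space choice_space"
  unfolding choice_space_def by (rule choices.prob_space_axioms)

lemma choice_point:
  "choice_point w \<in> {0<..<1} - \<rat>" "\<forall>i\<ge>1. cf_a i (choice_point w) = step_digits W_all w i"
  "(\<lambda>n. cf_mobius (step_digits W_all w) n 0) \<longlonglongrightarrow> choice_point w"
  unfolding choice_point_def using cf_value[of "step_digits W_all w"] step_digits_ge_1 by auto

lemma choice_point_measurable: "choice_point \<in> choice_space \<rightarrow>\<^sub>M restrict_space borel {0..1}"
proof (rule measurable_restrict_space2)
  have "choice_point w \<in> {0..1}" for w using choice_point(1)[of w] by auto
  then show "choice_point \<in> space choice_space \<rightarrow> {0..1}" by auto
  have "(\<lambda>w. real (w i)) \<in> borel_measurable choice_space" for i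
    unfolding choice_space_def
    by (rule measurable_compose[OF measurable_component_singleton[of i UNIV]]) auto
  then show "choice_point \<in> borel_measurable choice_space"
    by (intro borel_measurable_LIMSEQ_metric[OF _ choice_point(3)]
        borel_measurable_cf_mobius borel_measurable_step_digits)
qed

lemma AE_choice_in_digit_range: "AE w in choice_space. \<forall>i. w i \<in> digit_range i"
  unfolding choice_space_def
  by (subst AE_all_countable) (auto intro!: choices.AE_component simp: AE_measure_pmf_iff digit_range)

lemma choice_point_in_Lambda_set:
  assumes w: "\<forall>i. w i \<in> digit_range i"
  shows "choice_point w \<in> Lambda_set V W L"
proof -
  have "cf_a i (choice_point w) \<in> L i" if i: "1 \<le> i" "i \<notin> W_all" for i
  proof -
    obtain m where "i = Suc m" using i by (cases i) auto
    then have "cf_a i (choice_point w) = max 1 (w i)" using choice_point(2) i by simp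
    moreover have wi: "w i \<in> digit_range i" using w by blast
    then have "1 \<le> w i" by (rule digit_range(3))
    moreover have "w i \<in> L i" using wi i(1) unfolding digit_range_def by simp
    ultimately show ?thesis by simp
  qed
  moreover have "cf_a i (choice_point w) = Suc (cf_a (i - 1) (choice_point w))" if i: "i \<in> W_all" for i
  proof -
    obtain m where "i = Suc m" "1 \<le> m"
      using W_all_ge_2[OF i] by (cases i) auto
    then show ?thesis using choice_point(2) i by simp
  qed
  ultimately show ?thesis using choice_point(1) by (simp add: Lambda_set_iff)
qed

lemma measure_pmf_of_digit_range_single:
  "j \<in> digit_range i \<Longrightarrow>
    measure (measure_pmf (pmf_of_set (digit_range i))) {j} = 1 / real (card (digit_range i))"
  using digit_range(1,2) by (simp add: measure_pmf_single)

lemma prob_space_mu: "prob_space mu"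
  unfolding mu_def using prob_space_choice_space choice_point_measurable by (rule prob_space.prob_space_distr)

lemma sets_mu: "sets mu = sets (restrict_space borel {0..1})"
  by (simp add: mu_def)

lemma in_sets_mu_iff: "A \<in> sets mu \<longleftrightarrow> A \<in> sets borel \<and> A \<subseteq> {0..1}"
  by (auto simp: sets_mu sets_restrict_space_iff)

lemma Lambda_set_in_sets_mu: "Lambda_set V W L \<in> sets mu"
  using Lambda_set_borel by (auto simp: in_sets_mu_iff Lambda_set_def)

lemma emeasure_mu_Lambda_set: "emeasure mu (Lambda_set V W L) = 1"
proof -
  interpret choices: prob_space choice_space by (rule prob_space_choice_space)
  have pre: "choice_point -` Lambda_set V W L \<inter> space choice_space \<in> sets choice_space"
    using choice_point_measurable Lambda_set_in_sets_mu sets_mu by (metis measurable_sets)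
  have "emeasure mu (Lambda_set V W L) = emeasure choice_space (choice_point -` Lambda_set V W L \<inter> space choice_space)"
    unfolding mu_def using choice_point_measurable Lambda_set_in_sets_mu sets_mu by (subst emeasure_distr) auto
  also have "\<dots> = 1"
    using pre AE_choice_in_digit_range
    by (intro choices.emeasure_eq_1_AE) (auto elim!: eventually_mono intro: choice_point_in_Lambda_set)
  finally show ?thesis .
qed

lemma fund_interval_in_sets_mu:
  assumes "1 \<le> n" "\<forall>i\<in>{1..n}. a i \<ge> 1"
  shows "fund_interval n a \<in> sets mu"
proof -
  have "fund_interval n a \<in> sets borel" by (simp add: fund_interval_def Let_def)
  moreover have "fund_interval n a \<subseteq> {0..1}"
    using fund_interval_eq_image[OF assms] cf_mobius_image_antimono[OF _ assms(2), of 0] by simp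
  ultimately show ?thesis by (simp add: in_sets_mu_iff)
qed

lemma choice_point_in_fund_interval_iff:
  assumes n: "1 \<le> n" and a: "\<forall>i\<in>{1..n}. a i \<ge> 1"
    and steps: "\<forall>i\<in>{1..n}. i \<in> W_all \<longrightarrow> a i = Suc (a (i - 1))"
    and w: "\<forall>i\<in>{1..n}. 1 \<le> w i"
  shows "choice_point w \<in> fund_interval n a \<longleftrightarrow> (\<forall>i\<in>{1..n} - W_all. w i = a i)"
proof -
  have "choice_point w \<in> fund_interval n a \<longleftrightarrow> (\<forall>i\<in>{1..n}. cf_a i (choice_point w) = a i)"
    using fund_interval_eq_image[OF n a] mem_cf_mobius_image_iff[OF choice_point(1) a] by simp
  also have "\<dots> \<longleftrightarrow> (\<forall>i\<in>{1..n}. step_digits W_all w i = a i)"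
    using choice_point(2) by auto
  also have "\<dots> \<longleftrightarrow> (\<forall>i\<in>{1..n} - W_all. w i = a i)"
    using W_all_ge_2[of 1] steps w by (intro step_digits_eq_iff) auto
  finally show ?thesis .
qed

lemma measure_mu_fund_interval:
  assumes n: "1 \<le> n" and a: "\<forall>i\<in>{1..n}. a i \<ge> 1"
    and meets: "fund_interval n a \<inter> Lambda_set V W L \<noteq> {}"
  shows "measure mu (fund_interval n a) = (\<Prod>i\<in>{1..n} - W_all. 1 / real (card (L i)))"
proof -
  let ?I = "fund_interval n a" and ?F = "{1..n} - W_all"
  let ?M = "\<lambda>i. measure_pmf (pmf_of_set (digit_range i))"
  obtain y where y: "y \<in> ?I" "y \<in> Lambda_set V W L" using meets by blast
  note y_iff = y(2)[unfolded Lambda_set_iff]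
  have y_digits: "\<forall>i\<in>{1..n}. cf_a i y = a i"
    using y(1) fund_interval_eq_image[OF n a] mem_cf_mobius_image_iff[OF _ a] y_iff by auto
  have steps: "\<forall>i\<in>{1..n}. i \<in> W_all \<longrightarrow> a i = Suc (a (i - 1))"
  proof (intro ballI impI)
    fix i assume i: "i \<in> {1..n}" "i \<in> W_all"
    then have "i - 1 \<in> {1..n}" using W_all_ge_2 by fastforce
    then show "a i = Suc (a (i - 1))" using y_iff i y_digits by auto
  qed
  have free: "a i \<in> digit_range i" if "i \<in> ?F" for i
    using that y_iff y_digits by (auto simp: digit_range_def)
  define B where "B = prod_emb UNIV ?M ?F (\<Pi>\<^sub>E i\<in>?F. {a i})"
  have B_iff: "w \<in> B \<longleftrightarrow> (\<forall>i\<in>?F. w i = a i)" for w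
    unfolding B_def by (auto simp: prod_emb_iff PiE_iff extensional_def)
  have "measure mu ?I = measure choice_space (choice_point -` ?I \<inter> space choice_space)"
    unfolding mu_def using choice_point_measurable fund_interval_in_sets_mu[OF n a] sets_mu
    by (subst measure_distr) auto
  also have "\<dots> = measure choice_space B"
  proof (rule measure_eq_AE)
    show "AE w in choice_space. w \<in> choice_point -` ?I \<inter> space choice_space \<longleftrightarrow> w \<in> B"
      using AE_choice_in_digit_range AE_space
    proof eventually_elim
      case (elim w)
      then have "\<forall>i\<in>{1..n}. 1 \<le> w i" using digit_range(3) by blast
      then have "choice_point w \<in> ?I \<longleftrightarrow> w \<in> B"
        using choice_point_in_fund_interval_iff[OF n a steps] B_iff by simp
      then show ?case using elim by blast
    qed
    show "choice_point -` ?I \<inter> space choice_space \<in> sets choice_space"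
      using choice_point_measurable fund_interval_in_sets_mu[OF n a] sets_mu by (metis measurable_sets)
    show "B \<in> sets choice_space" unfolding B_def choice_space_def by (rule sets_PiM_I) auto
  qed
  also have "\<dots> = (\<Prod>i\<in>?F. measure (?M i) {a i})"
    unfolding B_def choice_space_def by (rule choices.measure_PiM_emb[of ?F "\<lambda>i. {a i}"]) auto
  also have "\<dots> = (\<Prod>i\<in>?F. 1 / real (card (L i)))"
  proof (rule prod.cong)
    fix i
    assume i: "i \<in> ?F"
    then have "digit_range i = L i" by (simp add: digit_range_def)
    then show "measure (?M i) {a i} = 1 / real (card (L i))"
      using measure_pmf_of_digit_range_single[OF free[OF i]] by simp
  qed simp
  finally show ?thesis .
qed

end

theorem lemma2p5:
  fixes V W L :: "nat \<Rightarrow> nat set"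
  assumes V_int: "\<forall>k\<ge>1. \<exists>l u. l \<le> u \<and> V k = {l..u}"
    and W_int: "\<forall>k\<ge>1. \<exists>l u. l \<le> u \<and> W k = {l..u}"
    and cover: "(\<Union>k\<in>{1..}. V k \<union> W k) = {1..}"
    and disj: "\<forall>k\<ge>1. \<forall>m\<ge>1. (k \<noteq> m \<longrightarrow> V k \<inter> V m = {} \<and> W k \<inter> W m = {})
                 \<and> V k \<inter> W m = {}"
    and VW: "\<forall>k\<ge>1. Max (V k) + 1 = Min (W k)"
    and WV: "\<forall>k\<ge>1. Max (W k) + 1 = Min (V (Suc k))"
    and L_int: "\<forall>n\<ge>1. \<exists>l u. 1 \<le> l \<and> l \<le> u \<and> L n = {l..u}"
  shows
    "(\<exists>\<mu> :: real measure.
        prob_space \<mu> \<and> sets \<mu> = sets (restrict_space borel {0..1::real}) \<and>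
        Lambda_set V W L \<in> sets \<mu> \<and> emeasure \<mu> (Lambda_set V W L) = 1 \<and>
        (\<forall>n\<ge>1. \<forall>a :: nat \<Rightarrow> nat. (\<forall>i\<in>{1..n}. a i \<ge> 1) \<longrightarrow>
           fund_interval n a \<inter> Lambda_set V W L \<noteq> {} \<longrightarrow>
           (n \<in> V 1 \<longrightarrow>
              measure \<mu> (fund_interval n a) = (\<Prod>i=1..n. 1 / real (card (L i)))) \<and>
           (\<forall>k\<ge>1. n \<in> W k \<longrightarrow>
              measure \<mu> (fund_interval n a) =
                (\<Prod>m=1..k. \<Prod>i\<in>V m. 1 / real (card (L i)))) \<and>
           (\<forall>k\<ge>1. n \<in> V (Suc k) \<longrightarrow>
              measure \<mu> (fund_interval n a) =
                (\<Prod>m=1..k. \<Prod>i\<in>V m. 1 / real (card (L i))) *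
                (\<Prod>i=Min (V (Suc k))..n. 1 / real (card (L i))))))
     \<and> (\<forall>t::nat. t \<ge> 2 \<longrightarrow>
           (\<forall>n\<ge>1. L n = {(2*n)^t..<(2*n+1)^t}) \<longrightarrow>
           Lambda_set V W L \<subseteq> J_set)"
proof -
  interpret block_digit_measure V W L using assms by unfold_locales
  have "(n \<in> V 1 \<longrightarrow>
          measure mu (fund_interval n a) = (\<Prod>i=1..n. 1 / real (card (L i)))) \<and>
        (\<forall>k\<ge>1. n \<in> W k \<longrightarrow>
          measure mu (fund_interval n a) = (\<Prod>m=1..k. \<Prod>i\<in>V m. 1 / real (card (L i)))) \<and>
        (\<forall>k\<ge>1. n \<in> V (Suc k) \<longrightarrow>
          measure mu (fund_interval n a) =
            (\<Prod>m=1..k. \<Prod>i\<in>V m. 1 / real (card (L i))) *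
            (\<Prod>i=Min (V (Suc k))..n. 1 / real (card (L i))))"
    if hyps: "1 \<le> n" "\<forall>i\<in>{1..n}. a i \<ge> 1" "fund_interval n a \<inter> Lambda_set V W L \<noteq> {}" for n a
    unfolding measure_mu_fund_interval[OF hyps]
    by (intro conjI allI impI prod_prefix_V_1 prod_prefix_W prod_prefix_V_Suc)
  moreover have "Lambda_set V W L \<subseteq> J_set" if "2 \<le> t" "\<forall>n\<ge>1. L n = {(2*n)^t..<(2*n+1)^t}" for t
    using that by (intro Lambda_set_subset_J_set[of t]) auto
  ultimately show ?thesis
    using prob_space_mu sets_mu Lambda_set_in_sets_mu emeasure_mu_Lambda_set by blast
qed

end
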